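(* Let $\Omega$ be a finite set, $f:2^{\Omega}\to\mathbb{R}_{+}$ nonnegative and increasing, $K\in\{1,\dots,|\Omega|\}$ and $L\in\{0,\dots,|\Omega|\}$. Let $\widehat{\mathcal{S}}_K\in\arg\max\{f(\mathcal{S}):|\mathcal{S}|\le K\}$, let $\mathcal{S}_0,\dots,\mathcal{S}_L$ be the greedy sets and $\mathscr{C}_L=\{\emptyset,\mathcal{S}_1,\dots,\mathcal{S}_L\}$. Then $$f(\mathcal{S}_L)\ge\min\Big\{f(\widehat{\mathcal{S}}_K),\ (1-(1-1/K)^L)\big[f(\widehat{\mathcal{S}}_K)-\min\{\widehat{\mathcal{I}}^{\mathscr{C}_L,K}[f],f(\widehat{\mathcal{S}}_K)\}\big]\Big\}.$$
   Context: Greedy algorithm: $\mathcal{S}_0=\emptyset$ and $\mathcal{S}_{\ell+1}=\mathcal{S}_\ell\cup\{s_{\ell+1}\}$ with $s_{\ell+1}\in\arg\max_{s\in\Omega\setminus\mathcal{S}_\ell}f(\mathcal{S}_\ell\cup\{s\})$. Local submodularity index: $\phi^{\mathcal{A},\mathcal{B}}[f]=[f(\mathcal{A}\cup\mathcal{B})-f(\mathcal{A})]-\sum_{s\in\mathcal{B}}[f(\mathcal{A}\cup\{s\})-f(\mathcal{A})]$. For a collection $\mathscr{C}$ of subsets of $\Omega$, $\widehat{\mathcal{I}}^{\mathscr{C},K}[f]=\max\{\phi^{\mathcal{A},\mathcal{B}}[f]:\mathcal{A}\in\mathscr{C},\mathcal{B}\subseteq\Omega,\mathcal{A}\cap\mathcal{B}=\emptyset,2\le|\mathcal{B}|\le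 K\}$, and $\widehat{\mathcal{I}}^{\mathscr{C},K}[f]=0$ if no such pair exists. *)

theory Defs
  imports Main "HOL.Real"
begin

definition local_submod_index ::
  "('a set \<Rightarrow> real) \<Rightarrow> 'a set \<Rightarrow> 'a set \<Rightarrow> real" where
  "local_submod_index f A B =
     (f (A \<union> B) - f A) - (\<Sum>s\<in>B. f (A \<union> {s}) - f A)"

definition submod_index ::
  "'a set \<Rightarrow> ('a set \<Rightarrow> real) \<Rightarrow> 'a set set \<Rightarrow> nat \<Rightarrow> real" where
  "submod_index \<Omega> f C K =
     (let P = {(A, B). A \<in> C \<and> B \<subseteq> \<Omega> \<and> A \<inter> B = {} \<and> 2 \<le> card B \<and> card B \<le> K}
      in if P = {} then 0 else Max ((\<lambda>(A, B). local_submod_index f A B) ` P))"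

definition greedy_seq :: "'a set \<Rightarrow> ('a set \<Rightarrow> real) \<Rightarrow> (nat \<Rightarrow> 'a set) \<Rightarrow> nat \<Rightarrow> bool" where
  "greedy_seq \<Omega> f S L \<longleftrightarrow> S 0 = {} \<and>
     (\<forall>l<L. \<exists>s. s \<in> \<Omega> - S l \<and> S (Suc l) = S l \<union> {s} \<and>
        (\<forall>t\<in>\<Omega> - S l. f (S l \<union> {t}) \<le> f (S l \<union> {s})))"

end

theory Submission
  imports Defs
begin

text \<open>Write OPT for the value of the optimal K-set and I for the index over the greedy
  sets. If at some step at most one element of the optimum is still missing, the greedy
  step picks up the optimum value. Otherwise the missing part B of the optimum has
  between 2 and K elements, so the definition of the local index together with the
  greedy choice gives OPT - f(S_l) <= I + K (f(S_(l+1)) - f(S_l)). Solving this linear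
  recurrence yields OPT - f(S_L) <= (1 - 1/K)^L (OPT - I) + I.\<close>

lemma greedy_seq_zero: "greedy_seq \<Omega> f S L \<Longrightarrow> S 0 = {}"
  unfolding greedy_seq_def by blast

lemma greedy_seq_SucE:
  assumes "greedy_seq \<Omega> f S L" "l < L"
  obtains s where "s \<in> \<Omega> - S l" "S (Suc l) = S l \<union> {s}"
    "\<And>t. t \<in> \<Omega> - S l \<Longrightarrow> f (S l \<union> {t}) \<le> f (S (Suc l))"
  using assms unfolding greedy_seq_def by force

lemma greedy_seq_subset:
  assumes "greedy_seq \<Omega> f S L" "l \<le> L"
  shows "S l \<subseteq> \<Omega>"
  using assms(2)
proof (induction l)
  case 0
  then show ?case using greedy_seq_zero[OF assms(1)] by simp
next
  case (Suc l)
  then obtain s where "s \<in> \<Omega> - S l" "S (Suc l) = S l \<union> {s}"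
    using greedy_seq_SucE[OF assms(1)] by (metis Suc_le_eq)
  with Suc show ?case by auto
qed

lemma greedy_seq_mono:
  assumes "greedy_seq \<Omega> f S L" "l \<le> m" "m \<le> L"
  shows "S l \<subseteq> S m"
  using assms(2,3)
proof (induction m rule: dec_induct)
  case base
  then show ?case by simp
next
  case (step m)
  then obtain s where "S (Suc m) = S m \<union> {s}"
    using greedy_seq_SucE[OF assms(1)] by (metis Suc_le_eq)
  with step show ?case by auto
qed

lemma local_submod_index_le_submod_index:
  assumes "finite \<Omega>" "finite C" "A \<in> C" "B \<subseteq> \<Omega>" "A \<inter> B = {}"
    "2 \<le> card B" "card B \<le> K"
  shows "local_submod_index f A B \<le> submod_index \<Omega> f C K"
proof -
  define P where
    "P = {(A, B). A \<in> C \<and> B \<subseteq> \<Omega> \<and> A \<inter> B = {} \<and> 2 \<le> card B \<and> card B \<le> K}"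
  have AB: "(A, B) \<in> P" unfolding P_def using assms by auto
  have "P \<subseteq> C \<times> Pow \<Omega>" unfolding P_def by auto
  then have "finite P" using assms(1,2) finite_subset by blast
  then have "local_submod_index f A B \<le> Max ((\<lambda>(A, B). local_submod_index f A B) ` P)"
    using AB by (intro Max_ge) force+
  then show ?thesis using AB unfolding submod_index_def P_def[symmetric] by auto
qed

lemma gain_le_local_submod_index:
  assumes "finite B" "card B \<le> K" "f A \<le> f A'"
    "\<And>t. t \<in> B \<Longrightarrow> f (A \<union> {t}) \<le> f A'"
  shows "f (A \<union> B) - f A \<le> local_submod_index f A B + real K * (f A' - f A)"
proof -
  have "(\<Sum>t\<in>B. f (A \<union> {t}) - f A) \<le> (\<Sum>t\<in>B. f A' - f A)"
    using assms(4) by (intro sum_mono) auto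
  also have "\<dots> = real (card B) * (f A' - f A)" by simp
  also have "\<dots> \<le> real K * (f A' - f A)"
    using assms(2,3) by (intro mult_right_mono) auto
  finally show ?thesis unfolding local_submod_index_def by linarith
qed

lemma greedy_step_gap_le:
  assumes fin: "finite \<Omega>"
    and incr: "\<And>X Y. X \<subseteq> Y \<Longrightarrow> Y \<subseteq> \<Omega> \<Longrightarrow> f X \<le> f Y"
    and greedy: "greedy_seq \<Omega> f S L" and l: "l < L"
    and Shat: "Shat \<subseteq> \<Omega>" "card Shat \<le> K"
    and missing: "2 \<le> card (Shat - S l)"
  shows "f Shat - f (S l) \<le>
    submod_index \<Omega> f (S ` {0..L}) K + real K * (f (S (Suc l)) - f (S l))"
proof -
  define B where "B = Shat - S l"
  have SlO: "S l \<subseteq> \<Omega>" and SlS: "S l \<subseteq> S (Suc l)" and SSucO: "S (Suc l) \<subseteq> \<Omega>"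
    using greedy_seq_subset[OF greedy] greedy_seq_mono[OF greedy] l by auto
  have finB: "finite B" and BO: "B \<subseteq> \<Omega>"
    unfolding B_def using Shat(1) fin finite_subset by auto
  have cardB: "card B \<le> K"
    using card_mono[OF finite_subset[OF Shat(1) fin]] Shat(2) unfolding B_def
    by (meson Diff_subset le_trans)
  obtain s where "\<And>t. t \<in> \<Omega> - S l \<Longrightarrow> f (S l \<union> {t}) \<le> f (S (Suc l))"
    using greedy_seq_SucE[OF greedy l] by blast
  then have "f (S l \<union> B) - f (S l) \<le>
      local_submod_index f (S l) B + real K * (f (S (Suc l)) - f (S l))"
    using finB cardB BO incr[OF SlS SSucO]
    by (intro gain_le_local_submod_index) (auto simp: B_def)
  moreover have "local_submod_index f (S l) B \<le> submod_index \<Omega> f (S ` {0..L}) K"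
    using fin l BO missing cardB
    by (intro local_submod_index_le_submod_index) (auto simp: B_def)
  moreover have "f Shat \<le> f (S l \<union> B)"
    using incr SlO Shat(1) unfolding B_def by (metis Un_Diff_cancel Un_subset_iff sup_ge2)
  ultimately show ?thesis by linarith
qed

lemma greedy_step_reaches_opt:
  assumes fin: "finite \<Omega>"
    and incr: "\<And>X Y. X \<subseteq> Y \<Longrightarrow> Y \<subseteq> \<Omega> \<Longrightarrow> f X \<le> f Y"
    and greedy: "greedy_seq \<Omega> f S L" and l: "l < L"
    and Shat: "Shat \<subseteq> \<Omega>"
    and missing: "card (Shat - S l) \<le> 1"
  shows "f Shat \<le> f (S (Suc l))"
proof -
  obtain s where s: "S (Suc l) = S l \<union> {s}"
    and best: "\<And>t. t \<in> \<Omega> - S l \<Longrightarrow> f (S l \<union> {t}) \<le> f (S (Suc l))"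
    using greedy_seq_SucE[OF greedy l] by blast
  have SlO: "S l \<subseteq> \<Omega>" and SSucO: "S (Suc l) \<subseteq> \<Omega>"
    using greedy_seq_subset[OF greedy] l by auto
  have "finite (Shat - S l)" using fin Shat finite_subset by blast
  with missing consider "Shat - S l = {}" | t where "Shat - S l = {t}"
    by (metis card_0_eq card_1_singletonE le_Suc_eq One_nat_def le_zero_eq)
  then show ?thesis
  proof cases
    case 1
    then show ?thesis using s SSucO by (intro incr) auto
  next
    case (2 t)
    then have "f Shat \<le> f (S l \<union> {t})" using SlO Shat by (intro incr) auto
    also have "\<dots> \<le> f (S (Suc l))" using 2 Shat by (intro best) auto
    finally show ?thesis .
  qed
qed

text \<open>With q = 1 - 1/K the hypothesis reads d (n+1) <= q d n + I/K.\<close>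

lemma linear_recurrence_bound:
  fixes d :: "nat \<Rightarrow> real" and K :: nat
  assumes K: "1 \<le> K" and start: "d 0 \<le> D"
    and rec: "\<And>n. n < N \<Longrightarrow> d n \<le> I + real K * (d n - d (Suc n))"
    and "n \<le> N"
  shows "d n \<le> (1 - 1 / real K) ^ n * (D - I) + I"
  using \<open>n \<le> N\<close>
proof (induction n)
  case 0
  then show ?case using start by simp
next
  case (Suc n)
  define q where "q = 1 - 1 / real K"
  have IH: "d n \<le> q ^ n * (D - I) + I" using Suc unfolding q_def by simp
  have Kpos: "real K > 0" using K by simp
  have "real K * d (Suc n) \<le> (real K - 1) * d n + I"
    using rec[of n] Suc.prems by (simp add: algebra_simps)
  also have "\<dots> \<le> (real K - 1) * (q ^ n * (D - I) + I) + I"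
    using IH K by (intro add_right_mono mult_left_mono) auto
  also have "\<dots> = real K * (q ^ Suc n * (D - I) + I)"
    unfolding q_def using Kpos by (simp add: field_simps)
  finally show ?case using Kpos unfolding q_def by simp
qed

theorem mainTheorem14:
  fixes \<Omega> :: "'a set" and f :: "'a set \<Rightarrow> real" and K L :: nat
    and S :: "nat \<Rightarrow> 'a set" and Shat :: "'a set"
  assumes fin: "finite \<Omega>"
    and nonneg: "\<And>X. X \<subseteq> \<Omega> \<Longrightarrow> 0 \<le> f X"
    and incr: "\<And>X Y. X \<subseteq> Y \<Longrightarrow> Y \<subseteq> \<Omega> \<Longrightarrow> f X \<le> f Y"
    and K: "1 \<le> K" "K \<le> card \<Omega>"
    and L: "L \<le> card \<Omega>"
    and Shat: "Shat \<subseteq> \<Omega>" "card Shat \<le> K"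
      "\<And>X. X \<subseteq> \<Omega> \<Longrightarrow> card X \<le> K \<Longrightarrow> f X \<le> f Shat"
    and greedy: "greedy_seq \<Omega> f S L"
  shows "f (S L) \<ge> min (f Shat)
           ((1 - (1 - 1 / real K) ^ L) *
             (f Shat - min (submod_index \<Omega> f (S ` {0..L}) K) (f Shat)))"
proof (cases "\<exists>l<L. card (Shat - S l) \<le> 1")
  case True
  then obtain l where l: "l < L" "card (Shat - S l) \<le> 1" by blast
  have "f Shat \<le> f (S (Suc l))"
    using greedy_step_reaches_opt[OF fin incr greedy l(1) Shat(1) l(2)] .
  also have "\<dots> \<le> f (S L)"
    using l greedy_seq_mono[OF greedy] greedy_seq_subset[OF greedy] by (intro incr) auto
  finally show ?thesis by simp
next
  case False
  define I where "I = submod_index \<Omega> f (S ` {0..L}) K"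
  have "f Shat - f (S L) \<le> (1 - 1 / real K) ^ L * (f Shat - I) + I"
  proof (rule linear_recurrence_bound[OF K(1)])
    show "f Shat - f (S 0) \<le> f Shat"
      using nonneg[of "{}"] greedy_seq_zero[OF greedy] by simp
    show "f Shat - f (S n) \<le> I + real K * (f Shat - f (S n) - (f Shat - f (S (Suc n))))"
      if "n < L" for n
      using greedy_step_gap_le[OF fin incr greedy that Shat(1,2)] False that
      unfolding I_def by force
  qed simp
  moreover have "0 \<le> f (S L)" using nonneg greedy_seq_subset[OF greedy] by simp
  ultimately show ?thesis unfolding I_def[symmetric]
    by (cases "I < f Shat") (auto simp: algebra_simps)
qed

end
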